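(* Let $n\ge 1$ and $r\in\{0,1,\dots,n-1\}$. For permutations $\mathbf{u},\mathbf{v}\in S_n$ in one-line notation $\mathbf{u}=[u(1),\dots,u(n)]$, $\mathbf{v}=[v(1),\dots,v(n)]$, define the cost $C(\mathbf{u}\to\mathbf{v})=\max_{i\in\{1,\dots,n\}}\bigl(v^{-1}(i)-u^{-1}(i)\bigr)$, and for $\mathbf{u}\in S_n$ define the ball $B_{n,r}(\mathbf{u})=\{\mathbf{v}\in S_n : C(\mathbf{u}\to\mathbf{v})\le r\}$. Then for every $\mathbf{u}\in S_n$, $$|B_{n,r}(\mathbf{u})|=r!\,(r+1)^{n-r}.$$
   Context: Here $u^{-1}(i)$ denotes the position of the element $i$ in the sequence $[u(1),\dots,u(n)]$, and similarly for $v^{-1}$. The cost $C(\mathbf{u}\to\mathbf{v})$ is thus the maximum, over elements $i$, of the increase in position of $i$ when passing from $\mathbf{u}$ to $\mathbf{v}$. *)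

theory Defs
  imports Main "HOL-Combinatorics.Permutations"
begin

text \<open>A permutation of S_n in one-line notation [u(1),...,u(n)] is a function
  u with u permutes {1..n}; the position of element i is inv u i.\<close>

definition cost :: "nat \<Rightarrow> (nat \<Rightarrow> nat) \<Rightarrow> (nat \<Rightarrow> nat) \<Rightarrow> int" where
  "cost n u v = Max ((\<lambda>i. int (inv v i) - int (inv u i)) ` {1..n})"

definition perm_ball :: "nat \<Rightarrow> nat \<Rightarrow> (nat \<Rightarrow> nat) \<Rightarrow> (nat \<Rightarrow> nat) set" where
  "perm_ball n r u = {v. v permutes {1..n} \<and> cost n u v \<le> int r}"

end

theory Submission
  imports Defs
begin

text \<open>Composing with \<open>u\<inverse>\<close> identifies the ball with the permutations \<open>p\<close> of
  \<open>{1..n}\<close> satisfying \<open>k \<le> p k + r\<close>. Such a \<open>p\<close> on \<open>{1..m+1}\<close> arises uniquely from one on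
  \<open>{1..m}\<close> by composing on the left with the transposition of \<open>m+1\<close> and \<open>b = p (m+1)\<close>,
  and the constraint survives exactly when \<open>m+1 \<le> b + r\<close>. That leaves \<open>min (m+1) (r+1)\<close>
  choices for \<open>b\<close>, so the count is \<open>\<Prod>k=1..n. min k (r+1) = r! (r+1)^(n-r)\<close>.\<close>

lemma cost_le_iff:
  assumes "n \<ge> 1"
  shows "cost n u v \<le> int r \<longleftrightarrow> (\<forall>i\<in>{1..n}. inv v i \<le> inv u i + r)"
proof -
  have "int (inv v i) - int (inv u i) \<le> int r \<longleftrightarrow> inv v i \<le> inv u i + r" for i
    by linarith
  moreover have "{1..n} \<noteq> {}" using assms by simp
  ultimately show ?thesis by (simp add: cost_def)
qed

lemma permutes_ball_inv_le_iff:
  assumes "v permutes S"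
  shows "(\<forall>i\<in>S. inv v i \<le> f i + r) \<longleftrightarrow> (\<forall>k\<in>S. k \<le> f (v k) + r)"
proof -
  have "(\<forall>i\<in>S. inv v i \<le> f i + r) \<longleftrightarrow> (\<forall>i\<in>v ` S. inv v i \<le> f i + r)"
    using permutes_image[OF assms] by simp
  then show ?thesis
    using permutes_inverses(2)[OF assms] by simp
qed

definition drop_bounded_perms :: "nat \<Rightarrow> nat \<Rightarrow> (nat \<Rightarrow> nat) set" where
  "drop_bounded_perms r m = {p. p permutes {1..m} \<and> (\<forall>k\<in>{1..m}. k \<le> p k + r)}"

lemma bij_betw_perm_ball_drop_bounded_perms:
  assumes "n \<ge> 1" and u: "u permutes {1..n}"
  shows "bij_betw ((\<circ>) (inv u)) (perm_ball n r u) (drop_bounded_perms r n)"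
proof (rule bij_betw_byWitness[where f' = "(\<circ>) u"])
  have u_inv: "u \<circ> inv u = id" "inv u \<circ> u = id"
    using permutes_inverses[OF u] by (simp_all add: fun_eq_iff)
  then show "\<forall>v\<in>perm_ball n r u. u \<circ> (inv u \<circ> v) = v"
    and "\<forall>p\<in>drop_bounded_perms r n. inv u \<circ> (u \<circ> p) = p"
    by (simp_all add: o_assoc)
  show "(\<circ>) (inv u) ` perm_ball n r u \<subseteq> drop_bounded_perms r n"
  proof clarify
    fix v assume "v \<in> perm_ball n r u"
    then have v: "v permutes {1..n}" "\<forall>i\<in>{1..n}. inv v i \<le> inv u i + r"
      by (simp_all add: perm_ball_def cost_le_iff[OF assms(1)])
    have "inv u \<circ> v permutes {1..n}"
      using permutes_compose[OF v(1) permutes_inv[OF u]] .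
    with v show "inv u \<circ> v \<in> drop_bounded_perms r n"
      using permutes_ball_inv_le_iff[OF v(1)] by (simp add: drop_bounded_perms_def)
  qed
  show "(\<circ>) u ` drop_bounded_perms r n \<subseteq> perm_ball n r u"
  proof clarify
    fix p assume "p \<in> drop_bounded_perms r n"
    then have p: "p permutes {1..n}" "\<forall>k\<in>{1..n}. k \<le> p k + r"
      by (simp_all add: drop_bounded_perms_def)
    have "u \<circ> p permutes {1..n}" using permutes_compose[OF p(1) u] .
    moreover have "inv u ((u \<circ> p) k) = p k" for k
      using u_inv(2) by (simp add: pointfree_idE)
    ultimately show "u \<circ> p \<in> perm_ball n r u"
      using p(2) permutes_ball_inv_le_iff[of "u \<circ> p"]
      by (simp add: perm_ball_def cost_le_iff[OF assms(1)])
  qed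
qed

lemma inj_on_transpose_comp_permutes:
  assumes "a \<notin> S"
  shows "inj_on (\<lambda>(b, p). transpose a b \<circ> p) (B \<times> {p. p permutes S})"
proof (rule inj_onI, clarify)
  fix b p c q
  assume p: "p permutes S" and q: "q permutes S" and eq: "transpose a b \<circ> p = transpose a c \<circ> q"
  have "p a = a" "q a = a"
    using p q assms by (simp_all add: permutes_not_in)
  with eq have bc: "b = c"
    by (metis comp_apply transpose_apply_first)
  with eq have "transpose a b \<circ> (transpose a b \<circ> p) = transpose a b \<circ> (transpose a b \<circ> q)"
    by simp
  then have "p = q"
    by (simp add: o_assoc)
  with bc show "b = c \<and> p = q" by simp
qed

lemma transpose_comp_in_drop_bounded_perms_iff:
  assumes p: "p permutes {1..m}" and b: "b \<in> {1..Suc m}"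
  shows "transpose (Suc m) b \<circ> p \<in> drop_bounded_perms r (Suc m) \<longleftrightarrow>
         Suc m \<le> b + r \<and> p \<in> drop_bounded_perms r m"
proof -
  let ?q = "transpose (Suc m) b \<circ> p"
  have "p permutes {1..Suc m}"
    using p by (rule permutes_subset) auto
  then have q_perm: "?q permutes {1..Suc m}"
    using b by (simp add: permutes_compose permutes_swap_id)
  have q_top: "?q (Suc m) = b"
    using permutes_not_in[OF p, of "Suc m"] by simp
  have q_low: "?q k = (if p k = b then Suc m else p k)" if "k \<in> {1..m}" for k
  proof -
    have "p k \<le> m"
      using permutes_in_image[OF p, of k] that by simp
    then show ?thesis by (simp add: transpose_def)
  qed
  show ?thesis
  proof
    assume "?q \<in> drop_bounded_perms r (Suc m)"
    then have q_bound: "k \<le> ?q k + r" if "k \<in> {1..Suc m}" for k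
      using that by (simp add: drop_bounded_perms_def)
    have top: "Suc m \<le> b + r"
      using q_bound[of "Suc m"] q_top by simp
    have "k \<le> p k + r" if "k \<in> {1..m}" for k
      using q_bound[of k] q_low[OF that] top that by (auto split: if_splits)
    with p top show "Suc m \<le> b + r \<and> p \<in> drop_bounded_perms r m"
      by (simp add: drop_bounded_perms_def)
  next
    assume top: "Suc m \<le> b + r \<and> p \<in> drop_bounded_perms r m"
    have "k \<le> ?q k + r" if k: "k \<in> {1..Suc m}" for k
    proof (cases "k = Suc m")
      case True
      then show ?thesis using top q_top by simp
    next
      case False
      with k have "k \<in> {1..m}" by auto
      then show ?thesis using top q_low[of k] by (auto simp: drop_bounded_perms_def)
    qed
    with q_perm show "?q \<in> drop_bounded_perms r (Suc m)"
      by (simp add: drop_bounded_perms_def)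
  qed
qed

lemma drop_bounded_perms_Suc:
  "drop_bounded_perms r (Suc m) = (\<lambda>(b, p). transpose (Suc m) b \<circ> p) `
      ({b \<in> {1..Suc m}. Suc m \<le> b + r} \<times> drop_bounded_perms r m)"
    (is "_ = ?g ` ?B")
proof
  have "{1..Suc m} = insert (Suc m) {1..m}" by auto
  then have perms: "{q. q permutes {1..Suc m}} =
      ?g ` {(b, p). b \<in> {1..Suc m} \<and> p \<in> {p. p permutes {1..m}}}"
    using permutes_insert[of "Suc m" "{1..m}"] by simp
  show "drop_bounded_perms r (Suc m) \<subseteq> ?g ` ?B"
  proof
    fix q assume q: "q \<in> drop_bounded_perms r (Suc m)"
    then have "q \<in> {q. q permutes {1..Suc m}}"
      by (simp add: drop_bounded_perms_def)
    then obtain b p where b: "b \<in> {1..Suc m}" and p: "p permutes {1..m}"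
      and q_eq: "q = transpose (Suc m) b \<circ> p"
      unfolding perms by auto
    with q have "(b, p) \<in> ?B"
      using transpose_comp_in_drop_bounded_perms_iff[OF p b] by simp
    then show "q \<in> ?g ` ?B"
      using q_eq by (auto intro: rev_image_eqI)
  qed
  show "?g ` ?B \<subseteq> drop_bounded_perms r (Suc m)"
  proof clarify
    fix b p assume b: "b \<in> {1..Suc m}" and top: "Suc m \<le> b + r"
      and p_bounded: "p \<in> drop_bounded_perms r m"
    then have "p permutes {1..m}"
      by (simp add: drop_bounded_perms_def)
    with b top p_bounded show "transpose (Suc m) b \<circ> p \<in> drop_bounded_perms r (Suc m)"
      using transpose_comp_in_drop_bounded_perms_iff by simp
  qed
qed

lemma card_drop_bounded_perms: "card (drop_bounded_perms r m) = (\<Prod>k=1..m. min k (r + 1))"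
proof (induction m)
  case 0
  have "drop_bounded_perms r 0 = {id}" by (auto simp: drop_bounded_perms_def)
  then show ?case by simp
next
  case (Suc m)
  have "{b \<in> {1..Suc m}. Suc m \<le> b + r} = {Suc m - min m r..Suc m}" by auto
  then have card_top: "card {b \<in> {1..Suc m}. Suc m \<le> b + r} = min (Suc m) (r + 1)" by simp
  have "inj_on (\<lambda>(b, p). transpose (Suc m) b \<circ> p)
      ({b \<in> {1..Suc m}. Suc m \<le> b + r} \<times> drop_bounded_perms r m)"
    by (rule inj_on_subset[OF inj_on_transpose_comp_permutes[of "Suc m" "{1..m}"]])
      (auto simp: drop_bounded_perms_def)
  then have "card (drop_bounded_perms r (Suc m)) =
      card ({b \<in> {1..Suc m}. Suc m \<le> b + r} \<times> drop_bounded_perms r m)"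
    unfolding drop_bounded_perms_Suc by (rule card_image)
  also have "\<dots> = min (Suc m) (r + 1) * card (drop_bounded_perms r m)"
    by (simp only: card_cartesian_product card_top)
  finally show ?case using Suc by (simp add: prod.nat_ivl_Suc' mult.commute)
qed

lemma prod_min_eq_fact_power:
  assumes "r \<le> n"
  shows "(\<Prod>k=1..n. min k (r + 1)) = fact r * (r + 1) ^ (n - r)"
  using assms
proof (induction n rule: dec_induct)
  case base
  have "(\<Prod>k=1..r. min k (r + 1)) = (\<Prod>k=1..r. k)" by (rule prod.cong) auto
  then show ?case by (simp add: fact_prod)
next
  case (step n)
  then show ?case by (simp add: prod.nat_ivl_Suc' Suc_diff_le algebra_simps)
qed

theorem theorem2:
  fixes n r :: nat and u :: "nat \<Rightarrow> nat"
  assumes "n \<ge> 1" and "r < n" and "u permutes {1..n}"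
  shows "card (perm_ball n r u) = fact r * (r + 1) ^ (n - r)"
proof -
  have "card (perm_ball n r u) = card (drop_bounded_perms r n)"
    using bij_betw_perm_ball_drop_bounded_perms[OF assms(1,3)] by (rule bij_betw_same_card)
  also have "\<dots> = (\<Prod>k=1..n. min k (r + 1))"
    by (rule card_drop_bounded_perms)
  also have "\<dots> = fact r * (r + 1) ^ (n - r)"
    using assms(2) by (intro prod_min_eq_fact_power) simp
  finally show ?thesis .
qed

end
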